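(* Consider the semidiscrete homogenized eddy current system with circuit coupling, in the unknowns $a(t)\in\mathbb{R}^m$, $i_R(t)\in\mathbb{R}$, $v_R(t)\in\mathbb{R}$: \begin{align*} C^\top M_{\nu,\tau}C\tfrac{d}{dt}a+C^\top M_\nu C a&=Xi_R,\\ X^\top\tfrac{d}{dt}a&=v_R, \end{align*} with internal variable $x_R=a$. Under the assumptions listed in the context, this system is a strongly resistance-like element.
   Context: Assumptions: $C\in\mathbb{R}^{f\times m}$ (gauged discrete curl with homogeneous Dirichlet conditions incorporated) has full column rank; $M_\nu\in\mathbb{R}^{f\times f}$ (reluctivity matrix) is symmetric positive definite; $M_{\nu,\tau}\in\mathbb{R}^{f\times f}$ (reluctivity weighted by the cable time constant) is symmetric positive semidefinite; $X\in\mathbb{R}^m$ is the discretized winding density function, a nonzero vector; $Q_\tau$ is the orthogonal projector onto $\ker(C^\top M_{\nu,\tau}C)$, $P_\tau=I-Q_\tau$, and $Q_\tau^\top X=0$ (no excitation outside the coils). Definitions: a function $F(u,y)$ is strongly monotone with respect to $u$ if there is $c>0$ with $\langle F(u,y)-F(\bar u,y),u-\bar u\rangle\ge c\|u-\bar u\|^2$ for all $y,u,\bar u$. A resistance-like element is one described by $f_R(\frac{d}{dt}d_R(x_R,i_R,v_R,t),x_R,i_R,v_R,t)=0$ such that at most one differentiation with respect to $t$ is needed to obtain $x_R'=\varphi_R(x_R,i_R,v_R,t)$, $i_R'=g_R(v_R',x_R,i_R,v_R,t)$; it is strongly resistance-like if additionally $g_R(v_R',x_R,i_R,v_R,t)$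 is continuous and strongly monotone with respect to $v_R'$. *)

theory Defs
  imports "HOL-Analysis.Analysis"
begin

definition spd :: "real^'n^'n \<Rightarrow> bool" where
  "spd M \<longleftrightarrow> transpose M = M \<and> (\<forall>x. x \<noteq> 0 \<longrightarrow> x \<bullet> (M *v x) > 0)"

definition spsd :: "real^'n^'n \<Rightarrow> bool" where
  "spsd M \<longleftrightarrow> transpose M = M \<and> (\<forall>x. x \<bullet> (M *v x) \<ge> 0)"

definition orth_projector_onto :: "real^'n^'n \<Rightarrow> (real^'n) set \<Rightarrow> bool" where
  "orth_projector_onto Q V \<longleftrightarrow> Q ** Q = Q \<and> transpose Q = Q \<and> range (\<lambda>x. Q *v x) = V"

definition strongly_monotone_wrt :: "('u::real_inner \<Rightarrow> 'y \<Rightarrow> 'u) \<Rightarrow> bool" where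
  "strongly_monotone_wrt F \<longleftrightarrow>
     (\<exists>c>0. \<forall>y u ub. (F u y - F ub y) \<bullet> (u - ub) \<ge> c * (norm (u - ub))^2)"

text \<open>An element is described through its derivative array of order one, i.e. the
  element equations together with their first time derivative, as a relation
  DA1 t (x, x', x'') (i, i', i'') (v, v', v'') between time, the internal variable,
  current and voltage, and their first and second time derivatives (treated as
  independent unknowns).\<close>
definition resistance_like_with ::
  "(real \<Rightarrow> 'x \<times> 'x \<times> 'x \<Rightarrow> real \<times> real \<times> real \<Rightarrow> real \<times> real \<times> real \<Rightarrow> bool)
   \<Rightarrow> ('x \<Rightarrow> real \<Rightarrow> real \<Rightarrow> real \<Rightarrow> 'x)
   \<Rightarrow> (real \<Rightarrow> 'x \<Rightarrow> real \<Rightarrow> real \<Rightarrow> real \<Rightarrow> real) \<Rightarrow> bool" where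
  "resistance_like_with DA1 \<phi> g \<longleftrightarrow>
     (\<forall>t x x1 x2 i i1 i2 v v1 v2. DA1 t (x, x1, x2) (i, i1, i2) (v, v1, v2) \<longrightarrow>
        x1 = \<phi> x i v t \<and> i1 = g v1 x i v t)"

definition strongly_resistance_like ::
  "(real \<Rightarrow> 'x::topological_space \<times> 'x \<times> 'x \<Rightarrow> real \<times> real \<times> real \<Rightarrow> real \<times> real \<times> real \<Rightarrow> bool)
   \<Rightarrow> bool" where
  "strongly_resistance_like DA1 \<longleftrightarrow>
     (\<exists>\<phi> g. resistance_like_with DA1 \<phi> g
        \<and> continuous_on UNIV (\<lambda>(v1, x, i, v, t). g v1 x i v t)
        \<and> strongly_monotone_wrt (\<lambda>v1 (x, i, v, t). g v1 x i v t))"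

definition eddy_DA1 ::
  "real^'m^'f \<Rightarrow> real^'f^'f \<Rightarrow> real^'f^'f \<Rightarrow> real^'m
   \<Rightarrow> real \<Rightarrow> (real^'m) \<times> (real^'m) \<times> (real^'m) \<Rightarrow> real \<times> real \<times> real \<Rightarrow> real \<times> real \<times> real \<Rightarrow> bool" where
  "eddy_DA1 C M\<nu> M\<nu>\<tau> X t xs is vs \<longleftrightarrow>
     (case (xs, is, vs) of ((a, a1, a2), (i, i1, i2), (v, v1, v2)) \<Rightarrow>
        (transpose C ** M\<nu>\<tau> ** C) *v a1 + (transpose C ** M\<nu> ** C) *v a = i *s X
      \<and> X \<bullet> a1 = v
      \<and> (transpose C ** M\<nu>\<tau> ** C) *v a2 + (transpose C ** M\<nu> ** C) *v a1 = i1 *s X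
      \<and> X \<bullet> a2 = v1)"

end

theory Submission
  imports Defs
begin

(* Write K = C^T M_{nu,tau} C, symmetric positive semidefinite, and A = C^T M_nu C, positive
   definite because C is injective.  Applying the projector Q onto ker K to the differentiated
   field equation removes K a'' and X (as Q X = 0) and leaves Q A a' = 0; so a' solves
   (K + Q A) a' = i X - A a, and K + Q A is invertible, which determines a' = phi(a, i).
   Since Q X = 0, X = K w for some w, and testing the differentiated field equation with w gives
   i' (w.X) = v' + w.(A a'), where w.X = w.(K w) > 0 because K w = X is nonzero.  Thus i' is
   affine in v' with slope 1/(w.X) > 0, hence continuous and strongly monotone in v'. *)

lemma inner_matrix_vector_mult_transpose:
  "(x::real^'n) \<bullet> (M *v y) = (transpose M *v x) \<bullet> y"
  by (simp add: dot_lmul_matrix)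

lemma inner_symmetric_matrix_vector_mult:
  "transpose K = K \<Longrightarrow> (x::real^'n) \<bullet> (K *v y) = (K *v x) \<bullet> y"
  using inner_matrix_vector_mult_transpose[of x K y] by (simp only:)

lemma quadratic_form_congruence:
  "(z::real^'n) \<bullet> ((transpose C ** M ** C) *v z) = (C *v z) \<bullet> (M *v (C *v z))"
proof -
  have "z \<bullet> ((transpose C ** M ** C) *v z) = z \<bullet> (transpose C *v (M *v (C *v z)))"
    by (simp add: matrix_vector_mul_assoc matrix_mul_assoc)
  also have "\<dots> = (C *v z) \<bullet> (M *v (C *v z))"
    using inner_matrix_vector_mult_transpose[of z "transpose C"] by (simp only: transpose_transpose)
  finally show ?thesis .
qed

lemma symmetric_congruence:
  fixes C :: "real^'m^'f" and M :: "real^'f^'f"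
  shows "transpose M = M \<Longrightarrow> transpose (transpose C ** M ** C) = transpose C ** M ** C"
  by (simp add: matrix_transpose_mul matrix_mul_assoc)

lemma spsd_congruence: "spsd M \<Longrightarrow> spsd (transpose C ** M ** C)"
  by (simp add: spsd_def symmetric_congruence quadratic_form_congruence)

lemma spd_congruence:
  fixes C :: "real^'m^'f" and M :: "real^'f^'f"
  assumes "spd M" and "inj ((*v) C)"
  shows "spd (transpose C ** M ** C)"
  unfolding spd_def
proof (intro conjI allI impI)
  show "transpose (transpose C ** M ** C) = transpose C ** M ** C"
    using assms(1) by (simp add: spd_def symmetric_congruence)
next
  fix z :: "real^'m" assume "z \<noteq> 0"
  then have "C *v z \<noteq> 0"
    using assms(2) by (metis injD matrix_vector_mult_0_right)
  then show "z \<bullet> ((transpose C ** M ** C) *v z) > 0"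
    using assms(1) by (simp add: spd_def quadratic_form_congruence)
qed

lemma spsd_quadratic_form_eq_0_imp:
  fixes K :: "real^'n^'n"
  assumes "spsd K" and "x \<bullet> (K *v x) = 0"
  shows "K *v x = 0"
proof (rule ccontr)
  define y where "y = K *v x"
  define b where "b = y \<bullet> y"
  define c where "c = y \<bullet> (K *v y)"
  assume "K *v x \<noteq> 0"
  then have "b > 0" by (simp add: b_def y_def)
  have "c \<ge> 0" using assms(1) by (simp add: spsd_def c_def)
  have "x \<bullet> (K *v y) = b"
    using assms(1) by (simp add: spsd_def inner_symmetric_matrix_vector_mult b_def y_def)
  have expand: "0 \<le> t * t * c - 2 * t * b" for t
  proof -
    have "0 \<le> (x - t *\<^sub>R y) \<bullet> (K *v (x - t *\<^sub>R y))"
      using assms(1) by (simp add: spsd_def)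
    also have "\<dots> = t * t * c - 2 * t * b"
      using assms \<open>x \<bullet> (K *v y) = b\<close>
        by (simp add: spsd_def inner_symmetric_matrix_vector_mult c_def y_def algebra_simps)
    finally show ?thesis .
  qed
  \<comment> \<open>For small t > 0 the right-hand side is negative unless b = 0.\<close>
  define t where "t = b / (c + 1)"
  have "t > 0" and "t * c < b"
    using \<open>b > 0\<close> \<open>c \<ge> 0\<close> by (simp_all add: t_def field_simps)
  have "0 \<le> t * (t * c - 2 * b)"
    using expand[of t] by (simp add: algebra_simps)
  with \<open>t > 0\<close> have "2 * b \<le> t * c"
    by (simp add: zero_le_mult_iff)
  with \<open>t * c < b\<close> \<open>b > 0\<close> show False by linarith
qed

lemma spsd_quadratic_form_pos:
  "spsd K \<Longrightarrow> K *v x \<noteq> 0 \<Longrightarrow> x \<bullet> (K *v x) > 0"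
  using spsd_quadratic_form_eq_0_imp by (force simp: spsd_def order_le_less)

lemma orth_projector_onto_range: "orth_projector_onto Q V \<Longrightarrow> Q *v y \<in> V"
  unfolding orth_projector_onto_def by blast

lemma orth_projector_onto_symmetric: "orth_projector_onto Q V \<Longrightarrow> transpose Q = Q"
  unfolding orth_projector_onto_def by blast

lemma orth_projector_onto_fixes: "orth_projector_onto Q V \<Longrightarrow> x \<in> V \<Longrightarrow> Q *v x = x"
  unfolding orth_projector_onto_def by (metis imageE matrix_vector_mul_assoc)

lemma orth_projector_onto_kernel_annihilates:
  assumes "transpose K = K" and "orth_projector_onto Q {x. K *v x = 0}"
  shows "Q *v (K *v y) = 0"
proof -
  have "z \<bullet> (Q *v (K *v y)) = 0" for z
  proof -
    have "K *v (Q *v z) = 0"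
      using orth_projector_onto_range[OF assms(2)] by simp
    moreover have "z \<bullet> (Q *v (K *v y)) = (Q *v z) \<bullet> (K *v y)"
      using orth_projector_onto_symmetric[OF assms(2)] by (rule inner_symmetric_matrix_vector_mult)
    moreover have "(Q *v z) \<bullet> (K *v y) = (K *v (Q *v z)) \<bullet> y"
      using assms(1) by (rule inner_symmetric_matrix_vector_mult)
    ultimately show ?thesis by simp
  qed
  from this[of "Q *v (K *v y)"] show ?thesis by (simp only: inner_eq_zero_iff)
qed

lemma inj_add_kernel_projector_mult:
  assumes "transpose K = K" and Q: "orth_projector_onto Q {x. K *v x = 0}" and "spd A"
  shows "inj ((*v) (K + Q ** A))"
proof -
  have "x = 0" if "(K + Q ** A) *v x = 0" for x
  proof -
    from that have sum: "K *v x + Q *v (A *v x) = 0"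
      by (simp add: matrix_vector_mult_add_rdistrib matrix_vector_mul_assoc)
    have "Q *v (K *v x + Q *v (A *v x)) = Q *v (A *v x)"
      using orth_projector_onto_kernel_annihilates[OF assms(1,2)]
        orth_projector_onto_fixes[OF Q orth_projector_onto_range[OF Q]]
      by (simp add: matrix_vector_right_distrib)
    with sum have QAx: "Q *v (A *v x) = 0" by simp
    with sum have "Q *v x = x"
      using orth_projector_onto_fixes[OF Q] by simp
    then have "x \<bullet> (A *v x) = x \<bullet> (Q *v (A *v x))"
      by (simp only: inner_symmetric_matrix_vector_mult[OF orth_projector_onto_symmetric[OF Q]])
    with QAx have "x \<bullet> (A *v x) = 0" by simp
    with \<open>spd A\<close> show "x = 0"
      unfolding spd_def by (metis less_irrefl)
  qed
  then show ?thesis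
    by (simp add: vec.inj_iff_eq_0)
qed

lemma symmetric_solvable_if_orthogonal_to_kernel:
  fixes K Q :: "real^'n^'n"
  assumes "transpose K = K" and Q: "orth_projector_onto Q {x. K *v x = 0}" and "Q *v X = 0"
  obtains w where "K *v w = X"
proof -
  have "spd (mat 1 :: real^'n^'n)"
    by (simp add: spd_def)
  with assms(1) Q have "inj ((*v) (K + Q ** mat 1))"
    by (rule inj_add_kernel_projector_mult)
  then obtain B where "B ** (K + Q) = mat 1"
    using matrix_left_invertible_injective by (metis matrix_mul_rid)
  then have "(K + Q) *v (B *v X) = X"
    by (metis matrix_left_right_inverse matrix_vector_mul_assoc matrix_vector_mul_lid)
  then have sum: "K *v (B *v X) + Q *v (B *v X) = X"
    by (simp add: matrix_vector_mult_add_rdistrib)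
  then have "Q *v (K *v (B *v X) + Q *v (B *v X)) = 0"
    using assms(3) by simp
  then have "Q *v (B *v X) = 0"
    using orth_projector_onto_kernel_annihilates[OF assms(1) Q]
      orth_projector_onto_fixes[OF Q orth_projector_onto_range[OF Q]]
    by (simp add: matrix_vector_right_distrib)
  with sum show thesis
    by (intro that[of "B *v X"]) simp
qed

lemma derivative_array_state_derivative:
  assumes "transpose K = K" and Q: "orth_projector_onto Q {x. K *v x = 0}" and "Q *v X = 0"
    and "K *v a1 + A *v a = i *s X" and "K *v a2 + A *v a1 = i1 *s X"
  shows "(K + Q ** A) *v a1 = i *s X - A *v a"
proof -
  have "Q *v (K *v a2 + A *v a1) = 0"
    using assms(3,5) by (simp add: scalar_mult_eq_scaleR matrix_vector_mult_scaleR)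
  then have "Q *v (A *v a1) = 0"
    using orth_projector_onto_kernel_annihilates[OF assms(1) Q]
    by (simp add: matrix_vector_right_distrib)
  with assms(4) show ?thesis
    by (simp add: matrix_vector_mult_add_rdistrib matrix_vector_mul_assoc[symmetric] algebra_simps)
qed

lemma derivative_array_current_derivative:
  assumes "transpose K = K" and "K *v w = X"
    and "K *v a2 + A *v a1 = i1 *s X" and "X \<bullet> a2 = v1"
  shows "i1 * (w \<bullet> X) = v1 + w \<bullet> (A *v a1)"
proof -
  have "i1 * (w \<bullet> X) = w \<bullet> (K *v a2) + w \<bullet> (A *v a1)"
    using assms(3) by (metis inner_add_right inner_scaleR_right scalar_mult_eq_scaleR)
  also have "w \<bullet> (K *v a2) = v1"
    using assms by (simp add: inner_symmetric_matrix_vector_mult)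
  finally show ?thesis .
qed

lemma strongly_resistance_like_affineI:
  fixes h :: "'x::topological_space \<Rightarrow> real \<Rightarrow> real \<Rightarrow> real \<Rightarrow> real"
  assumes "resistance_like_with DA1 \<phi> (\<lambda>v1 x i v t. c * v1 + h x i v t)" and "c > 0"
    and "continuous_on UNIV (\<lambda>(x, i, v, t). h x i v t)"
  shows "strongly_resistance_like DA1"
  unfolding strongly_resistance_like_def
proof (intro exI conjI)
  show "resistance_like_with DA1 \<phi> (\<lambda>v1 x i v t. c * v1 + h x i v t)"
    by (fact assms(1))
  have "continuous_on UNIV (\<lambda>p. c * fst p + (\<lambda>(x, i, v, t). h x i v t) (snd p))"
    by (intro continuous_intros continuous_on_compose2[OF assms(3)]) auto
  then show "continuous_on UNIV (\<lambda>(v1, x, i, v, t). c * v1 + h x i v t)"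
    by (simp add: case_prod_beta)
  show "strongly_monotone_wrt (\<lambda>v1 (x, i, v, t). c * v1 + h x i v t)"
    unfolding strongly_monotone_wrt_def
    using assms(2) by (auto simp: case_prod_beta power2_eq_square algebra_simps)
qed

lemma eddy_DA1_resistance_like:
  assumes K: "K = transpose C ** M\<nu>\<tau> ** C" "transpose K = K"
    and Q: "orth_projector_onto Q {x. K *v x = 0}" "Q *v X = 0"
    and A: "A = transpose C ** M\<nu> ** C" and B: "B ** (K + Q ** A) = mat 1"
    and w: "K *v w = X" "w \<bullet> X > 0"
  defines "\<phi> \<equiv> \<lambda>x i v t. B *v (i *s X - A *v x)"
  shows "resistance_like_with (eddy_DA1 C M\<nu> M\<nu>\<tau> X) \<phi>
    (\<lambda>v1 x i v t. 1 / (w \<bullet> X) * v1 + w \<bullet> (A *v \<phi> x i v t) / (w \<bullet> X))"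
  unfolding resistance_like_with_def
proof (intro allI impI)
  fix t x x1 x2 i i1 i2 v v1 v2
  assume "eddy_DA1 C M\<nu> M\<nu>\<tau> X t (x, x1, x2) (i, i1, i2) (v, v1, v2)"
  then have DA: "K *v x1 + A *v x = i *s X" "K *v x2 + A *v x1 = i1 *s X" "X \<bullet> x2 = v1"
    unfolding eddy_DA1_def K(1) A by auto
  have "x1 = \<phi> x i v t"
    using derivative_array_state_derivative[OF K(2) Q DA(1,2)] B
    by (metis \<phi>_def matrix_vector_mul_assoc matrix_vector_mul_lid)
  moreover have "i1 = 1 / (w \<bullet> X) * v1 + w \<bullet> (A *v x1) / (w \<bullet> X)"
    using derivative_array_current_derivative[OF K(2) w(1) DA(2,3)] w(2) by (simp add: field_simps)
  ultimately show "x1 = \<phi> x i v t \<and> i1 = 1 / (w \<bullet> X) * v1 + w \<bullet> (A *v \<phi> x i v t) / (w \<bullet> X)"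
    by simp
qed

theorem proposition9:
  fixes C :: "real^'m^'f" and M\<nu> M\<nu>\<tau> :: "real^'f^'f" and X :: "real^'m"
    and Q\<tau> :: "real^'m^'m"
  assumes "rank C = CARD('m)"
    and "spd M\<nu>"
    and "spsd M\<nu>\<tau>"
    and "X \<noteq> 0"
    and "orth_projector_onto Q\<tau> {x. (transpose C ** M\<nu>\<tau> ** C) *v x = 0}"
    and "transpose Q\<tau> *v X = 0"
  shows "strongly_resistance_like (eddy_DA1 C M\<nu> M\<nu>\<tau> X)"
proof -
  define K where "K = transpose C ** M\<nu>\<tau> ** C"
  define A where "A = transpose C ** M\<nu> ** C"
  have "spsd K"
    unfolding K_def using assms(3) by (rule spsd_congruence)
  then have K: "transpose K = K"
    by (simp add: spsd_def)
  have "spd A"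
    unfolding A_def using assms(2) full_rank_injective assms(1) by (blast intro: spd_congruence)
  have Q: "orth_projector_onto Q\<tau> {x. K *v x = 0}"
    using assms(5) by (simp add: K_def)
  have QX: "Q\<tau> *v X = 0"
    using assms(6) orth_projector_onto_symmetric[OF Q] by simp
  obtain B where B: "B ** (K + Q\<tau> ** A) = mat 1"
    using inj_add_kernel_projector_mult[OF K Q \<open>spd A\<close>] matrix_left_invertible_injective by blast
  obtain w where w: "K *v w = X"
    using symmetric_solvable_if_orthogonal_to_kernel[OF K Q QX] .
  have \<gamma>: "w \<bullet> X > 0"
    using spsd_quadratic_form_pos[OF \<open>spsd K\<close>, of w] w assms(4) by simp
  from eddy_DA1_resistance_like[OF K_def K Q QX A_def B w \<gamma>] show ?thesis
    by (rule strongly_resistance_like_affineI)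
      (use \<gamma> in \<open>auto simp: case_prod_beta scalar_mult_eq_scaleR
        intro!: continuous_intros bounded_linear.continuous_on[OF matrix_vector_mul_bounded_linear]\<close>)
qed

end
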